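(* Let $G$ be a solenoidal Hausdorff topological group. Then every continuous action of $G$ on the Hilbert cube $I^{\aleph_0}=[0,1]^{\mathbb N}$ has a fixed point. In particular every continuous action of $\mathbb R$ on $I^{\aleph_0}$ has a fixed point.
   Context: A topological group $G$ is solenoidal if there exists a continuous homomorphism $f\colon\mathbb R\to G$ whose image is dense in $G$. *)

theory Defs
  imports "HOL-Analysis.Analysis"
begin

text \<open>A topological group, written additively (group_add does NOT require commutativity):
  the group operation and inversion are continuous (product topology on 'g \<times> 'g).\<close>
definition topological_group_add :: "'g::{topological_space,group_add} itself \<Rightarrow> bool" where
  "topological_group_add (TYPE('g)) \<longleftrightarrow>
     continuous_on UNIV (\<lambda>p::'g \<times> 'g. fst p + snd p) \<and>
     continuous_on UNIV (\<lambda>x::'g. - x)"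

definition solenoidal :: "'g::{topological_space,group_add} itself \<Rightarrow> bool" where
  "solenoidal (TYPE('g)) \<longleftrightarrow>
     (\<exists>f :: real \<Rightarrow> 'g. continuous_on UNIV f \<and> (\<forall>s t. f (s + t) = f s + f t)
        \<and> closure (range f) = UNIV)"

text \<open>The Hilbert cube [0,1]^N, as a subset of nat \<Rightarrow> real with the product topology.\<close>
definition hilbert_cube :: "(nat \<Rightarrow> real) set" where
  "hilbert_cube = {x. \<forall>n. x n \<in> {0..1}}"

definition continuous_action_hc ::
  "('g::{topological_space,group_add} \<Rightarrow> (nat \<Rightarrow> real) \<Rightarrow> (nat \<Rightarrow> real)) \<Rightarrow> bool" where
  "continuous_action_hc a \<longleftrightarrow>
     (\<forall>g x. x \<in> hilbert_cube \<longrightarrow> a g x \<in> hilbert_cube) \<and>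
     (\<forall>x \<in> hilbert_cube. a 0 x = x) \<and>
     (\<forall>g h. \<forall>x \<in> hilbert_cube. a (g + h) x = a g (a h x)) \<and>
     continuous_on (UNIV \<times> hilbert_cube) (\<lambda>p. a (fst p) (snd p))"

end

theory Submission
  imports Defs
begin

(*
  1. H is compact, and every continuous self-map of H has a fixed point (Schauder for H).
     For finitely many coordinates i < N an approximate fixed point comes from Kuhn's
     combinatorial lemma (Sperner) applied to a fine grid on the face [0,1]^N; compactness
     turns approximate into exact fixed coordinates, and a finite-intersection argument
     over N gives a genuine fixed point.
  2. A continuous flow (action of R) on a compact metric set K with the fixed point
     property has a common fixed point: the maps b(1/2^n) have nested nonempty closed
     fixed-point sets, a point in their intersection is fixed by all dyadic rationals, and
     these are dense in R.
  3. For a solenoidal G with dense continuous homomorphism f : R -> G, a fixed point of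
     the pulled-back flow t -> a (f t) is fixed by the dense subgroup f(R), hence by G.
*)

lemma hilbert_cube_PiE: "hilbert_cube = PiE UNIV (\<lambda>_. {0..1})"
  unfolding hilbert_cube_def by (auto simp: PiE_def)

lemma compact_hilbert_cube: "compact hilbert_cube"
proof -
  have "compactin (product_topology (\<lambda>_. euclidean) UNIV) (PiE UNIV (\<lambda>_::nat. {0..1::real}))"
    by (simp add: compactin_PiE)
  then show ?thesis
    unfolding hilbert_cube_PiE euclidean_product_topology by simp
qed

lemma closed_hilbert_cube: "closed hilbert_cube"
  using compact_hilbert_cube compact_imp_closed by blast

lemma dist_fun_le_coordinatewise:
  fixes x y :: "'a::countable \<Rightarrow> 'b::metric_space"
  assumes "\<And>i. dist (x i) (y i) \<le> c"
  shows "dist x y \<le> 2 * c"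
proof -
  have c: "c \<ge> 0"
    using assms[of undefined] zero_le_dist order_trans by blast
  have summable: "summable (\<lambda>n. (1/2::real)^n * min (dist (x (from_nat n)) (y (from_nat n))) 1)"
    by (rule summable_comparison_test'[of "\<lambda>n. (1/2)^n"]) (auto simp: summable_geometric_iff)
  have "dist x y = (\<Sum>n. (1/2)^n * min (dist (x (from_nat n)) (y (from_nat n))) 1)"
    unfolding dist_fun_def by simp
  also have "\<dots> \<le> (\<Sum>n. (1/2::real)^n * c)"
  proof (rule suminf_le[OF _ summable])
    show "(1/2::real)^n * min (dist (x (from_nat n)) (y (from_nat n))) 1 \<le> (1/2)^n * c" for n
      using assms[of "from_nat n"] by (intro mult_left_mono) auto
    show "summable (\<lambda>n. (1/2::real)^n * c)"
      by (intro summable_mult2) (simp add: summable_geometric_iff)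
  qed
  also have "\<dots> = 2 * c"
    using suminf_geometric[of "1/2::real"] suminf_mult2[of "\<lambda>n. (1/2::real)^n" c]
    by (simp add: summable_geometric_iff)
  finally show ?thesis .
qed

lemma hilbert_cube_uniform_coordinates:
  fixes \<phi> :: "(nat \<Rightarrow> real) \<Rightarrow> (nat \<Rightarrow> real)"
  assumes cont: "continuous_on hilbert_cube \<phi>" and "e > 0"
  obtains \<delta> where "\<delta> > 0"
    and "\<And>x y i. x \<in> hilbert_cube \<Longrightarrow> y \<in> hilbert_cube \<Longrightarrow> dist x y < \<delta> \<Longrightarrow> i < N
           \<Longrightarrow> \<bar>\<phi> x i - \<phi> y i\<bar> < e"
proof -
  have "\<exists>d>0. \<forall>x\<in>hilbert_cube. \<forall>y\<in>hilbert_cube. dist x y < d \<longrightarrow> \<bar>\<phi> x i - \<phi> y i\<bar> < e" for i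
  proof -
    have "continuous_on hilbert_cube (\<lambda>x. \<phi> x i)"
      using cont by (rule continuous_on_product_then_coordinatewise)
    then have "uniformly_continuous_on hilbert_cube (\<lambda>x. \<phi> x i)"
      using compact_hilbert_cube by (rule compact_uniformly_continuous)
    then obtain d where "d > 0" "\<forall>x\<in>hilbert_cube. \<forall>y\<in>hilbert_cube. dist y x < d \<longrightarrow> dist (\<phi> y i) (\<phi> x i) < e"
      using \<open>e > 0\<close> unfolding uniformly_continuous_on_def by blast
    then show ?thesis
      by (metis dist_commute dist_real_def)
  qed
  then obtain d where d: "\<And>i. d i > 0"
    "\<And>i x y. x \<in> hilbert_cube \<Longrightarrow> y \<in> hilbert_cube \<Longrightarrow> dist x y < d i \<Longrightarrow> \<bar>\<phi> x i - \<phi> y i\<bar> < e"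
    by metis
  define \<delta> where "\<delta> = Min (insert 1 (d ` {..<N}))"
  have "\<delta> > 0"
    unfolding \<delta>_def using d(1) by auto
  moreover have "\<bar>\<phi> x i - \<phi> y i\<bar> < e"
    if "x \<in> hilbert_cube" "y \<in> hilbert_cube" "dist x y < \<delta>" "i < N" for x y i
  proof -
    have "\<delta> \<le> d i" unfolding \<delta>_def using \<open>i < N\<close> by simp
    then show ?thesis using d(2)[of x y i] that by simp
  qed
  ultimately show ?thesis
    using that by blast
qed

definition cube_grid_point :: "nat \<Rightarrow> nat \<Rightarrow> (nat \<Rightarrow> nat) \<Rightarrow> (nat \<Rightarrow> real)" where
  "cube_grid_point p N x = (\<lambda>j. if j < N then real (x j) / real p else 0)"

lemma cube_grid_point_in_hilbert_cube:
  assumes "p > 0" and "\<forall>i<N. x i \<le> p"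
  shows "cube_grid_point p N x \<in> hilbert_cube"
  using assms unfolding cube_grid_point_def hilbert_cube_def by auto

lemma cube_grid_point_cell:
  assumes "\<forall>j<N. q j \<le> x j \<and> x j \<le> q j + 1"
  shows "\<bar>cube_grid_point p N x j - cube_grid_point p N q j\<bar> \<le> 1 / p"
proof (cases "j < N")
  case True
  then have "\<bar>real (x j) - real (q j)\<bar> \<le> 1"
    using assms by fastforce
  then have "\<bar>real (x j) / p - real (q j) / p\<bar> \<le> 1 / p"
    by (simp add: diff_divide_distrib[symmetric] divide_right_mono)
  with True show ?thesis
    unfolding cube_grid_point_def by simp
qed (simp add: cube_grid_point_def)

text \<open>The Sperner labelling induced by a self-map of the cube in coordinate i: label 0 where
  the point is not pushed down (and not on the top face), label 1 otherwise.\<close>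
definition push_label :: "((nat \<Rightarrow> real) \<Rightarrow> (nat \<Rightarrow> real)) \<Rightarrow> (nat \<Rightarrow> real) \<Rightarrow> nat \<Rightarrow> nat" where
  "push_label \<phi> y i = (if y i = 1 then 1 else if y i \<le> \<phi> y i then 0 else 1)"

lemma push_label_0: "push_label \<phi> y i = 0 \<Longrightarrow> y i \<le> \<phi> y i"
  unfolding push_label_def by (auto split: if_splits)

lemma push_label_1:
  assumes "push_label \<phi> y i \<noteq> 0" and "\<phi> y \<in> hilbert_cube"
  shows "\<phi> y i \<le> y i"
  using assms unfolding push_label_def hilbert_cube_def by (auto split: if_splits)

text \<open>Kuhn's lemma applied to the push labelling yields a
  cell whose vertices carry both labels in every coordinate.\<close>
lemma hilbert_cube_kuhn_cell:
  fixes \<phi> :: "(nat \<Rightarrow> real) \<Rightarrow> (nat \<Rightarrow> real)" and p :: nat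
  assumes into: "\<And>x. x \<in> hilbert_cube \<Longrightarrow> \<phi> x \<in> hilbert_cube" and "p > 0"
  obtains z where "z \<in> hilbert_cube"
    and "\<And>i. i < N \<Longrightarrow> \<exists>u\<in>hilbert_cube. \<exists>w\<in>hilbert_cube.
           (\<forall>j. \<bar>u j - z j\<bar> \<le> 1 / p) \<and> (\<forall>j. \<bar>w j - z j\<bar> \<le> 1 / p) \<and> u i \<le> \<phi> u i \<and> \<phi> w i \<le> w i"
proof -
  define grid where "grid = cube_grid_point p N"
  define label where "label = push_label \<phi>"
  have grid_in: "grid x \<in> hilbert_cube" if "\<forall>i<N. x i \<le> p" for x
    unfolding grid_def using \<open>p > 0\<close> that by (rule cube_grid_point_in_hilbert_cube)
  obtain q where q: "\<forall>i<N. q i < p"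
    "\<forall>i<N. \<exists>r s. (\<forall>j<N. q j \<le> r j \<and> r j \<le> q j + 1) \<and> (\<forall>j<N. q j \<le> s j \<and> s j \<le> q j + 1)
                 \<and> label (grid r) i \<noteq> label (grid s) i"
  proof (rule kuhn_lemma[of p N "\<lambda>x. label (grid x)"])
    show "\<forall>x. (\<forall>i<N. x i \<le> p) \<longrightarrow> (\<forall>i<N. x i = 0 \<longrightarrow> label (grid x) i = 0)"
    proof (intro allI impI)
      fix x i assume x: "\<forall>i<N. x i \<le> p" "i < N" "x i = 0"
      have "0 \<le> \<phi> (grid x) i"
        using into[OF grid_in[OF x(1)]] unfolding hilbert_cube_def by auto
      then show "label (grid x) i = 0"
        using x unfolding label_def push_label_def grid_def cube_grid_point_def by auto
    qed
    show "\<forall>x. (\<forall>i<N. x i \<le> p) \<longrightarrow> (\<forall>i<N. x i = p \<longrightarrow> label (grid x) i = 1)"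
      using \<open>p > 0\<close> unfolding label_def push_label_def grid_def cube_grid_point_def by auto
  qed (use \<open>p > 0\<close> in \<open>auto simp: label_def push_label_def\<close>)
  define z where "z = grid q"
  have cell_in: "grid x \<in> hilbert_cube" and cell_near: "\<bar>grid x j - z j\<bar> \<le> 1 / p"
    if "\<forall>j<N. q j \<le> x j \<and> x j \<le> q j + 1" for x j
  proof -
    show "grid x \<in> hilbert_cube"
      using that q(1) by (intro grid_in) (metis Suc_eq_plus1 Suc_leI le_trans)
    show "\<bar>grid x j - z j\<bar> \<le> 1 / p"
      unfolding grid_def z_def using that by (rule cube_grid_point_cell)
  qed
  have "\<exists>u\<in>hilbert_cube. \<exists>w\<in>hilbert_cube. (\<forall>j. \<bar>u j - z j\<bar> \<le> 1 / p) \<and> (\<forall>j. \<bar>w j - z j\<bar> \<le> 1 / p)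
          \<and> u i \<le> \<phi> u i \<and> \<phi> w i \<le> w i" if "i < N" for i
  proof -
    obtain r s where r: "\<forall>j<N. q j \<le> r j \<and> r j \<le> q j + 1" and s: "\<forall>j<N. q j \<le> s j \<and> s j \<le> q j + 1"
      and rs: "label (grid r) i \<noteq> label (grid s) i"
      using q(2) \<open>i < N\<close> by blast
    have witness: "?thesis" if "label (grid x) i = 0" "label (grid y) i \<noteq> 0"
      and "\<forall>j<N. q j \<le> x j \<and> x j \<le> q j + 1" "\<forall>j<N. q j \<le> y j \<and> y j \<le> q j + 1" for x y
      using push_label_0[OF that(1)[unfolded label_def]]
        push_label_1[OF that(2)[unfolded label_def] into[OF cell_in[OF that(4)]]]
        cell_in[OF that(3)] cell_in[OF that(4)] cell_near[OF that(3)] cell_near[OF that(4)] by blast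
    have "label (grid r) i = 0 \<or> label (grid s) i = 0"
      using rs unfolding label_def push_label_def by (auto split: if_splits)
    then show ?thesis
      using witness[OF _ _ r s] witness[OF _ _ s r] rs by auto
  qed
  moreover have "z \<in> hilbert_cube"
    unfolding z_def using q(1) by (intro grid_in) (simp add: less_imp_le)
  ultimately show ?thesis
    using that by blast
qed

text \<open>Approximate fixed points in finitely many coordinates: on a fine enough grid cell,
  uniform continuity transfers the opposite pushes at the two vertices to the base
  point z of the cell.\<close>
lemma hilbert_cube_approx_fixpoint:
  fixes \<phi> :: "(nat \<Rightarrow> real) \<Rightarrow> (nat \<Rightarrow> real)"
  assumes cont: "continuous_on hilbert_cube \<phi>"
    and into: "\<And>x. x \<in> hilbert_cube \<Longrightarrow> \<phi> x \<in> hilbert_cube" and "e > 0"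
  shows "\<exists>z\<in>hilbert_cube. \<forall>i<N. \<bar>\<phi> z i - z i\<bar> < e"
proof -
  obtain \<delta> where "\<delta> > 0" and \<delta>: "\<And>x y i. x \<in> hilbert_cube \<Longrightarrow> y \<in> hilbert_cube \<Longrightarrow>
      dist x y < \<delta> \<Longrightarrow> i < N \<Longrightarrow> \<bar>\<phi> x i - \<phi> y i\<bar> < e / 2"
    using hilbert_cube_uniform_coordinates[OF cont, of "e / 2" N] \<open>e > 0\<close> by auto
  obtain p :: nat where p: "max (2 / \<delta>) (2 / e) < p"
    using reals_Archimedean2 by blast
  have "0 < 2 / e"
    using \<open>e > 0\<close> by simp
  then have "p > 0"
    using p by linarith
  then have mesh: "2 / p < \<delta>" "1 / p < e / 2"
    using p \<open>\<delta> > 0\<close> \<open>e > 0\<close> by (auto simp: field_simps)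
  obtain z where "z \<in> hilbert_cube" and cell: "\<And>i. i < N \<Longrightarrow> \<exists>u\<in>hilbert_cube. \<exists>w\<in>hilbert_cube.
      (\<forall>j. \<bar>u j - z j\<bar> \<le> 1 / p) \<and> (\<forall>j. \<bar>w j - z j\<bar> \<le> 1 / p) \<and> u i \<le> \<phi> u i \<and> \<phi> w i \<le> w i"
    using hilbert_cube_kuhn_cell[of \<phi> p N, OF into \<open>p > 0\<close>] by blast
  have close: "\<bar>\<phi> u i - \<phi> z i\<bar> < e / 2"
    if "u \<in> hilbert_cube" "\<forall>j. \<bar>u j - z j\<bar> \<le> 1 / p" "i < N" for u i
  proof -
    have "dist u z \<le> 2 * (1 / p)"
      using that(2) by (intro dist_fun_le_coordinatewise) (simp add: dist_real_def)
    then show ?thesis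
      using \<delta>[OF that(1) \<open>z \<in> hilbert_cube\<close> _ that(3)] mesh by simp
  qed
  have "\<bar>\<phi> z i - z i\<bar> < e" if i: "i < N" for i
  proof -
    obtain u w where "u \<in> hilbert_cube" "w \<in> hilbert_cube" and near: "\<forall>j. \<bar>u j - z j\<bar> \<le> 1 / p"
      "\<forall>j. \<bar>w j - z j\<bar> \<le> 1 / p" and push: "u i \<le> \<phi> u i" "\<phi> w i \<le> w i"
      using cell[OF i] by blast
    have "\<bar>\<phi> u i - \<phi> z i\<bar> < e / 2" "\<bar>\<phi> w i - \<phi> z i\<bar> < e / 2"
      using close \<open>u \<in> hilbert_cube\<close> \<open>w \<in> hilbert_cube\<close> near i by auto
    with near[rule_format, of i] mesh(2) push show ?thesis
      by linarith
  qed
  with \<open>z \<in> hilbert_cube\<close> show ?thesis by blast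
qed

text \<open>Exact fixed coordinates: the total displacement in the first N coordinates is
  continuous on the compact cube, so it attains its infimum, which is 0.\<close>
lemma hilbert_cube_fixpoint_coordinates:
  fixes \<phi> :: "(nat \<Rightarrow> real) \<Rightarrow> (nat \<Rightarrow> real)"
  assumes cont: "continuous_on hilbert_cube \<phi>"
    and into: "\<And>x. x \<in> hilbert_cube \<Longrightarrow> \<phi> x \<in> hilbert_cube"
  shows "\<exists>x\<in>hilbert_cube. \<forall>i<N. \<phi> x i = x i"
proof -
  define g where "g x = (\<Sum>i<N. \<bar>\<phi> x i - x i\<bar>)" for x
  have "continuous_on hilbert_cube g"
    unfolding g_def
    by (intro continuous_intros continuous_on_product_then_coordinatewise[OF cont]
        continuous_on_subset[OF continuous_on_product_coordinates]) auto
  moreover have "hilbert_cube \<noteq> {}"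
    unfolding hilbert_cube_def by auto
  ultimately obtain x where x: "x \<in> hilbert_cube" and min: "\<And>y. y \<in> hilbert_cube \<Longrightarrow> g x \<le> g y"
    using continuous_attains_inf[OF compact_hilbert_cube] by metis
  have "g x \<le> 0 + e" if "e > 0" for e
  proof -
    obtain z where "z \<in> hilbert_cube" and z: "\<forall>i<N. \<bar>\<phi> z i - z i\<bar> < e / (N + 1)"
      using hilbert_cube_approx_fixpoint[OF cont into, of "e / (N + 1)" N] \<open>e > 0\<close> by auto
    have "g z \<le> (\<Sum>i<N. e / (N + 1))"
      unfolding g_def using z by (intro sum_mono) (simp add: less_imp_le)
    also have "\<dots> \<le> e"
      using \<open>e > 0\<close> by (simp add: field_simps)
    finally show ?thesis
      using min[OF \<open>z \<in> hilbert_cube\<close>] by simp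
  qed
  then have "g x \<le> 0"
    by (rule field_le_epsilon)
  moreover have "g x \<ge> 0"
    unfolding g_def by (simp add: sum_nonneg)
  ultimately have "\<forall>i\<in>{..<N}. \<bar>\<phi> x i - x i\<bar> = 0"
    unfolding g_def by (simp add: sum_nonneg_eq_0_iff)
  with x show ?thesis by auto
qed

text \<open>Schauder's theorem for the Hilbert cube: the closed sets of points fixed in
  coordinate i have the finite intersection property.\<close>
theorem hilbert_cube_fixpoint:
  fixes \<phi> :: "(nat \<Rightarrow> real) \<Rightarrow> (nat \<Rightarrow> real)"
  assumes cont: "continuous_on hilbert_cube \<phi>"
    and into: "\<And>x. x \<in> hilbert_cube \<Longrightarrow> \<phi> x \<in> hilbert_cube"
  shows "\<exists>x\<in>hilbert_cube. \<phi> x = x"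
proof -
  define C where "C i = {x \<in> hilbert_cube. \<phi> x i - x i = 0}" for i
  have "hilbert_cube \<inter> (\<Inter>i. C i) \<noteq> {}"
  proof (rule compact_imp_fip_image[OF compact_hilbert_cube])
    show "closed (C i)" for i
    proof -
      have "continuous_on hilbert_cube (\<lambda>x. \<phi> x i - x i)"
        by (intro continuous_on_diff continuous_on_product_then_coordinatewise[OF cont]
            continuous_on_subset[OF continuous_on_product_coordinates]) auto
      then show ?thesis
        unfolding C_def using closed_hilbert_cube by (rule continuous_closed_preimage_constant)
    qed
    show "hilbert_cube \<inter> (\<Inter>i\<in>I. C i) \<noteq> {}" if "finite I" for I
    proof -
      obtain N where N: "I \<subseteq> {..<N}"
        using \<open>finite I\<close> finite_nat_iff_bounded by auto
      obtain x where "x \<in> hilbert_cube" "\<forall>i<N. \<phi> x i = x i"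
        using hilbert_cube_fixpoint_coordinates[OF cont into] by blast
      then have "x \<in> hilbert_cube \<inter> (\<Inter>i\<in>I. C i)"
        using N unfolding C_def by auto
      then show ?thesis by blast
    qed
  qed
  then obtain x where "x \<in> hilbert_cube" "\<And>i. x \<in> C i"
    by blast
  then have "x \<in> hilbert_cube" "\<phi> x = x"
    unfolding C_def by auto
  then show ?thesis by blast
qed

lemma closed_fixpoints:
  fixes \<phi> :: "'a::metric_space \<Rightarrow> 'a"
  assumes "closed K" and "continuous_on K \<phi>"
  shows "closed {x \<in> K. \<phi> x = x}"
proof -
  have "continuous_on K (\<lambda>x. dist (\<phi> x) x)"
    using assms(2) by (intro continuous_intros)
  then have "closed {x \<in> K. dist (\<phi> x) x = 0}"
    using assms(1) by (rule continuous_closed_preimage_constant)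
  then show ?thesis by simp
qed

lemma closure_dyadic_rationals_real: "closure {of_int m / 2 ^ n | m n. True} = (UNIV :: real set)"
proof -
  have "(\<Union>k. \<Union>f \<in> Basis \<rightarrow> \<int>. {\<Sum>i::real \<in> Basis. (f i / 2^k) *\<^sub>R i})
          \<subseteq> {of_int m / 2 ^ n | m n. True}"
    by (auto elim!: Ints_cases) blast
  then have "closure (\<Union>k. \<Union>f \<in> Basis \<rightarrow> \<int>. {\<Sum>i::real \<in> Basis. (f i / 2^k) *\<^sub>R i})
          \<subseteq> closure {of_int m / 2 ^ n | m n. True}"
    by (rule closure_mono)
  then show ?thesis
    unfolding closure_dyadic_rationals by blast
qed

lemma continuous_constant_on_dyadics:
  fixes h :: "real \<Rightarrow> 'b::t1_space"
  assumes "continuous_on UNIV h" and "\<And>m n. h (of_int m / 2 ^ n) = c"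
  shows "h t = c"
proof (rule continuous_constant_on_closure[where f = h])
  show "continuous_on (closure {of_int m / 2 ^ n :: real | m n. True}) h"
    unfolding closure_dyadic_rationals_real by (rule assms(1))
  show "t \<in> closure {of_int m / 2 ^ n :: real | m n. True}"
    unfolding closure_dyadic_rationals_real by (rule UNIV_I)
qed (use assms(2) in auto)

lemma action_fix_int_multiples:
  fixes b :: "real \<Rightarrow> 'a \<Rightarrow> 'a"
  assumes zero: "\<And>x. x \<in> K \<Longrightarrow> b 0 x = x"
    and add: "\<And>s t x. x \<in> K \<Longrightarrow> b (s + t) x = b s (b t x)"
    and "x \<in> K" and fixed: "b t x = x"
  shows "b (of_int m * t) x = x"
proof -
  have nat: "b (real k * t) x = x" for k
  proof (induction k)
    case 0
    show ?case using zero[OF \<open>x \<in> K\<close>] by simp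
  next
    case (Suc k)
    have "b (real (Suc k) * t) x = b (real k * t) (b t x)"
      using add[OF \<open>x \<in> K\<close>, of "real k * t" t] by (simp add: algebra_simps)
    then show ?case
      using fixed Suc.IH by simp
  qed
  show ?thesis
  proof (cases "m \<ge> 0")
    case True
    then show ?thesis
      using nat[of "nat m"] by simp
  next
    case False
    define k where "k = nat (- m)"
    have "b (of_int m * t) x = b (of_int m * t) (b (real k * t) x)"
      using nat by simp
    also have "\<dots> = b (of_int m * t + real k * t) x"
      using add[OF \<open>x \<in> K\<close>] by simp
    also have "\<dots> = x"
      using False zero[OF \<open>x \<in> K\<close>] by (simp add: k_def algebra_simps)
    finally show ?thesis .
  qed
qed

lemma action_fix_coarser_dyadic:
  fixes b :: "real \<Rightarrow> 'a \<Rightarrow> 'a"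
  assumes zero: "\<And>x. x \<in> K \<Longrightarrow> b 0 x = x"
    and add: "\<And>s t x. x \<in> K \<Longrightarrow> b (s + t) x = b s (b t x)"
    and "x \<in> K" and fixed: "b (1 / 2 ^ n) x = x" and "m \<le> n"
  shows "b (1 / 2 ^ m) x = x"
proof -
  have "(1 / 2 ^ m :: real) = of_int (2 ^ (n - m)) * (1 / 2 ^ n)"
  proof -
    have "of_int (2 ^ (n - m)) = (2 :: real) ^ (n - m)"
      by simp
    also have "\<dots> = 2 ^ n / 2 ^ m"
      using \<open>m \<le> n\<close> by (intro power_diff) auto
    finally show ?thesis by simp
  qed
  also have "b \<dots> x = x"
    by (rule action_fix_int_multiples[of K b, OF zero add \<open>x \<in> K\<close> fixed])
  finally show ?thesis .
qed

text \<open>The fixed-point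
  sets of b (1/2^n) are closed, nonempty and decreasing; a common point is fixed by all
  dyadic times, and these are dense.\<close>
theorem flow_fixpoint:
  fixes b :: "real \<Rightarrow> 'a::metric_space \<Rightarrow> 'a"
  assumes "compact K"
    and fixpoint_property: "\<And>\<phi>. continuous_on K \<phi> \<Longrightarrow> \<phi> ` K \<subseteq> K \<Longrightarrow> \<exists>x\<in>K. \<phi> x = x"
    and into: "\<And>t x. x \<in> K \<Longrightarrow> b t x \<in> K"
    and zero: "\<And>x. x \<in> K \<Longrightarrow> b 0 x = x"
    and add: "\<And>s t x. x \<in> K \<Longrightarrow> b (s + t) x = b s (b t x)"
    and cont_space: "\<And>t. continuous_on K (b t)"
    and cont_time: "\<And>x. x \<in> K \<Longrightarrow> continuous_on UNIV (\<lambda>t. b t x)"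
  shows "\<exists>x\<in>K. \<forall>t. b t x = x"
proof -
  define D where "D n = {x \<in> K. b (1 / 2 ^ n) x = x}" for n :: nat
  have D_mono: "D n \<subseteq> D m" if "m \<le> n" for m n
    unfolding D_def using action_fix_coarser_dyadic[of K b, OF zero add _ _ that] by blast
  have "K \<inter> (\<Inter>n. D n) \<noteq> {}"
  proof (rule compact_imp_fip_image[OF \<open>compact K\<close>])
    show "closed (D n)" for n
      unfolding D_def using compact_imp_closed[OF \<open>compact K\<close>] cont_space by (rule closed_fixpoints)
    show "K \<inter> (\<Inter>n\<in>I. D n) \<noteq> {}" if "finite I" for I
    proof -
      obtain N where N: "I \<subseteq> {..<N}"
        using \<open>finite I\<close> finite_nat_iff_bounded by auto
      obtain x where "x \<in> K" "b (1 / 2 ^ N) x = x"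
        using fixpoint_property[OF cont_space] into by blast
      then have "x \<in> D N"
        unfolding D_def by simp
      have "x \<in> D n" if "n \<in> I" for n
      proof -
        have "n \<le> N"
          using N that by fastforce
        then show ?thesis
          using D_mono \<open>x \<in> D N\<close> by blast
      qed
      with \<open>x \<in> K\<close> show ?thesis by blast
    qed
  qed
  then obtain x where "x \<in> K" and "\<forall>n. x \<in> D n"
    by blast
  then have dyadic_fix: "b (1 / 2 ^ n) x = x" for n
    unfolding D_def by blast
  have "b (of_int m * (1 / 2 ^ n)) x = x" for m n
    by (rule action_fix_int_multiples[of K b, OF zero add \<open>x \<in> K\<close> dyadic_fix])
  then have "b (of_int m / 2 ^ n) x = x" for m n
    by simp
  then have "b t x = x" for t
    using continuous_constant_on_dyadics[OF cont_time[OF \<open>x \<in> K\<close>]] by blast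
  with \<open>x \<in> K\<close> show ?thesis by blast
qed

lemma continuous_action_hc_slices:
  fixes a :: "'g::{topological_space,group_add} \<Rightarrow> (nat \<Rightarrow> real) \<Rightarrow> (nat \<Rightarrow> real)"
  assumes "continuous_action_hc a"
  shows "continuous_on hilbert_cube (a g)"
    and "x \<in> hilbert_cube \<Longrightarrow> continuous_on UNIV (\<lambda>g. a g x)"
proof -
  have joint: "continuous_on (UNIV \<times> hilbert_cube) (\<lambda>p. a (fst p) (snd p))"
    using assms unfolding continuous_action_hc_def by blast
  have "continuous_on hilbert_cube (\<lambda>x. (\<lambda>p. a (fst p) (snd p)) (g, x))"
    by (rule continuous_on_compose2[OF joint]) (auto intro!: continuous_intros)
  then show "continuous_on hilbert_cube (a g)"
    by simp
  assume "x \<in> hilbert_cube"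
  then have "continuous_on UNIV (\<lambda>g. (\<lambda>p. a (fst p) (snd p)) (g, x))"
    by (intro continuous_on_compose2[OF joint]) (auto intro!: continuous_intros)
  then show "continuous_on UNIV (\<lambda>g. a g x)"
    by simp
qed

theorem continuous_action_hc_real_fixpoint:
  fixes b :: "real \<Rightarrow> (nat \<Rightarrow> real) \<Rightarrow> (nat \<Rightarrow> real)"
  assumes "continuous_action_hc b"
  shows "\<exists>x\<in>hilbert_cube. \<forall>t. b t x = x"
proof (rule flow_fixpoint[OF compact_hilbert_cube])
  show "\<exists>x\<in>hilbert_cube. \<phi> x = x"
    if "continuous_on hilbert_cube \<phi>" "\<phi> ` hilbert_cube \<subseteq> hilbert_cube" for \<phi>
    using that by (intro hilbert_cube_fixpoint) auto
qed (use assms continuous_action_hc_slices in \<open>auto simp: continuous_action_hc_def\<close>)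

lemma continuous_action_hc_pullback:
  fixes a :: "'g::{topological_space,group_add} \<Rightarrow> (nat \<Rightarrow> real) \<Rightarrow> (nat \<Rightarrow> real)"
    and f :: "real \<Rightarrow> 'g"
  assumes action: "continuous_action_hc a"
    and cont: "continuous_on UNIV f" and hom: "\<And>s t. f (s + t) = f s + f t"
  shows "continuous_action_hc (\<lambda>t. a (f t))"
proof -
  have f0: "f 0 = 0"
    using hom[of 0 0] by (metis add.right_neutral add_left_cancel)
  have joint: "continuous_on (UNIV \<times> hilbert_cube) (\<lambda>p. a (fst p) (snd p))"
    using action unfolding continuous_action_hc_def by blast
  have "continuous_on (UNIV \<times> hilbert_cube) (\<lambda>p. (f (fst p), snd p))"
    by (intro continuous_on_Pair continuous_on_snd continuous_on_compose2[OF cont continuous_on_fst]) auto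
  then have "continuous_on (UNIV \<times> hilbert_cube) (\<lambda>p. (\<lambda>p. a (fst p) (snd p)) (f (fst p), snd p))"
    by (rule continuous_on_compose2[OF joint]) auto
  then show ?thesis
    using action hom f0 unfolding continuous_action_hc_def by simp
qed

theorem theorem2p3p12:
  fixes a :: "'g::{t2_space,group_add} \<Rightarrow> (nat \<Rightarrow> real) \<Rightarrow> (nat \<Rightarrow> real)"
    and b :: "real \<Rightarrow> (nat \<Rightarrow> real) \<Rightarrow> (nat \<Rightarrow> real)"
  shows "(topological_group_add TYPE('g) \<and> solenoidal TYPE('g) \<and> continuous_action_hc a
            \<longrightarrow> (\<exists>x \<in> hilbert_cube. \<forall>g. a g x = x))
         \<and> (continuous_action_hc b \<longrightarrow> (\<exists>x \<in> hilbert_cube. \<forall>t. b t x = x))"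
proof (intro conjI impI)
  show "\<exists>x \<in> hilbert_cube. \<forall>t. b t x = x" if "continuous_action_hc b"
    using that by (rule continuous_action_hc_real_fixpoint)
  assume "topological_group_add TYPE('g) \<and> solenoidal TYPE('g) \<and> continuous_action_hc a"
  then have action: "continuous_action_hc a"
    and "\<exists>f :: real \<Rightarrow> 'g. continuous_on UNIV f \<and> (\<forall>s t. f (s + t) = f s + f t)
           \<and> closure (range f) = UNIV"
    unfolding solenoidal_def by auto
  then obtain f :: "real \<Rightarrow> 'g" where "continuous_on UNIV f" "\<And>s t. f (s + t) = f s + f t"
    and dense: "closure (range f) = UNIV"
    by blast
  then obtain x where "x \<in> hilbert_cube" and fixed: "\<And>t. a (f t) x = x"
    using continuous_action_hc_real_fixpoint[OF continuous_action_hc_pullback[OF action]] by blast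
  text \<open>The stabiliser of x is closed and contains the dense subgroup f(R).\<close>
  have "a g x = x" for g
  proof (rule continuous_constant_on_closure[where f = "\<lambda>g. a g x"])
    show "continuous_on (closure (range f)) (\<lambda>g. a g x)"
      using continuous_action_hc_slices(2)[OF action \<open>x \<in> hilbert_cube\<close>] dense by simp
  qed (use fixed dense in auto)
  with \<open>x \<in> hilbert_cube\<close> show "\<exists>x \<in> hilbert_cube. \<forall>g. a g x = x"
    by blast
qed

end
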